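(* There is an algorithm that, given a \textsc{2-Visits} instance $d_1\le\dots\le d_n$ whose deadlines are pairwise distinct, decides in $O(n)$ time whether a feasible schedule exists; moreover, if one exists, a feasible schedule can be constructed in $O(n)$ time.
   Context: \textsc{2-Visits}: given a non-decreasing sequence of $n$ positive integers (deadlines) $d_1\le \dots\le d_n$, decide whether there exists a schedule of length $2n$ (an assignment of one visit to each position $1,\dots,2n$) containing exactly two visits of each node $i\in[n]$, such that the first visit of $i$ is at position at most $d_i$ and the second visit of $i$ is at most $d_i$ positions after the first visit of $i$. Such a schedule is called feasible. *)

theory Defs
  imports Main
begin

text \<open>A schedule is a list sigma of length 2n; position p (1-based) holds the node
  sigma ! (p-1), nodes are 1..n.  Node i (1-based) has deadline ds ! (i-1).\<close>

definition feasible_schedule :: "nat list \<Rightarrow> nat list \<Rightarrow> bool" where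
  "feasible_schedule ds \<sigma> \<longleftrightarrow>
     length \<sigma> = 2 * length ds \<and>
     set \<sigma> \<subseteq> {1..length ds} \<and>
     (\<forall>i\<in>{1..length ds}. \<exists>p q. p < q \<and> q < length \<sigma> \<and>
         {k. k < length \<sigma> \<and> \<sigma> ! k = i} = {p, q} \<and>
         p + 1 \<le> ds ! (i - 1) \<and> q - p \<le> ds ! (i - 1))"

definition two_visits_instance :: "nat list \<Rightarrow> bool" where
  "two_visits_instance ds \<longleftrightarrow> sorted ds \<and> (\<forall>d\<in>set ds. 0 < d)"

definition has_feasible_schedule :: "nat list \<Rightarrow> bool" where
  "has_feasible_schedule ds \<longleftrightarrow> (\<exists>\<sigma>. feasible_schedule ds \<sigma>)"

datatype instr =
    LoadC nat nat
  | Add nat nat nat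
  | Sub nat nat nat
  | Read nat nat
  | Write nat nat
  | Jz nat nat

type_synonym config = "nat \<times> (nat \<Rightarrow> nat)"

fun exec :: "instr \<Rightarrow> config \<Rightarrow> config" where
  "exec (LoadC r k) (pc, M) = (pc + 1, M(r := k))"
| "exec (Add r a b) (pc, M) = (pc + 1, M(r := M a + M b))"
| "exec (Sub r a b) (pc, M) = (pc + 1, M(r := M a - M b))"
| "exec (Read r a) (pc, M) = (pc + 1, M(r := M (M a)))"
| "exec (Write a b) (pc, M) = (pc + 1, M(M a := M b))"
| "exec (Jz a l) (pc, M) = (if M a = 0 then l else pc + 1, M)"

definition halted :: "instr list \<Rightarrow> config \<Rightarrow> bool" where
  "halted P c \<longleftrightarrow> length P \<le> fst c"

definition step :: "instr list \<Rightarrow> config \<Rightarrow> config" where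
  "step P c = (if halted P c then c else exec (P ! fst c) c)"

definition run :: "instr list \<Rightarrow> nat \<Rightarrow> config \<Rightarrow> config" where
  "run P t c = (step P ^^ t) c"

definition input_mem :: "nat list \<Rightarrow> nat \<Rightarrow> nat" where
  "input_mem ds r = (if r = 0 then length ds
                     else if r \<le> length ds then ds ! (r - 1) else 0)"

definition output_schedule :: "nat \<Rightarrow> (nat \<Rightarrow> nat) \<Rightarrow> nat list" where
  "output_schedule n M = map (\<lambda>p. M (p + 1)) [0..<2 * n]"

definition correct_output :: "nat list \<Rightarrow> (nat \<Rightarrow> nat) \<Rightarrow> bool" where
  "correct_output ds M \<longleftrightarrow>
     (M 0 = 1 \<longleftrightarrow> has_feasible_schedule ds) \<and>
     (M 0 = 0 \<longleftrightarrow> \<not> has_feasible_schedule ds) \<and>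
     (has_feasible_schedule ds \<longrightarrow>
        feasible_schedule ds (output_schedule (length ds) M))"

end

theory Submission
  imports Defs
begin

(* The greedy below fills positions 1, 2, ..., 2n in order and makes the second visits in the
   order of the first visits: at each position it makes the second visit of the oldest pending
   node b + 1, unless nothing is pending or the next node a + 1 has to be first visited now to
   meet its deadline.  So a first visit is made before its deadline only when nothing is pending.
   If the second visit of b + 1 comes too late, at position a + b + 1, then 2 d_i <= a + b for
   all i <= b + 1 (deadlines increase) and d_i <= a + b for all i <= a, so in any feasible
   schedule the first visits of 1..a and the second visits of 1..b + 1 would be a + b + 1
   distinct positions among the first a + b.  On the RAM each greedy step costs a bounded number
   of instructions, once the deadlines are moved out of the registers needed as work space. *)

section \<open>The greedy schedule\<close>

definition deadline :: "nat list \<Rightarrow> nat \<Rightarrow> nat" where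
  "deadline ds i = ds ! (i - 1)"

definition strict_instance :: "nat list \<Rightarrow> bool" where
  "strict_instance ds \<longleftrightarrow> sorted_wrt (<) ds \<and> (\<forall>d\<in>set ds. 0 < d)"

lemma strict_instanceI: "two_visits_instance ds \<Longrightarrow> distinct ds \<Longrightarrow> strict_instance ds"
  unfolding two_visits_instance_def strict_instance_def by (simp add: strict_sorted_iff)

lemma deadline_pos: "strict_instance ds \<Longrightarrow> i \<in> {1..length ds} \<Longrightarrow> 0 < deadline ds i"
  unfolding strict_instance_def deadline_def by (auto simp: Suc_le_eq)

lemma deadline_strict_mono:
  assumes "strict_instance ds" "1 \<le> i" "i < j" "j \<le> length ds"
  shows "deadline ds i < deadline ds j"
  using assms sorted_wrt_nth_less[of "(<)" ds "i - 1" "j - 1"]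
  unfolding strict_instance_def deadline_def by simp

lemma deadline_mono:
  "strict_instance ds \<Longrightarrow> 1 \<le> i \<Longrightarrow> i \<le> j \<Longrightarrow> j \<le> length ds \<Longrightarrow> deadline ds i \<le> deadline ds j"
  using deadline_strict_mono[of ds i j] by (cases "i = j") auto

lemma feasible_visits:
  assumes "feasible_schedule ds \<sigma>" "i \<in> {1..length ds}"
  defines "S \<equiv> {k. k < length \<sigma> \<and> \<sigma> ! k = i}"
  shows "Min S < Max S \<and> \<sigma> ! Min S = i \<and> \<sigma> ! Max S = i \<and>
    Min S < deadline ds i \<and> Max S - Min S \<le> deadline ds i"
proof -
  from assms obtain p q where pq: "p < q" "S = {p, q}" "p + 1 \<le> ds ! (i - 1)" "q - p \<le> ds ! (i - 1)"
    unfolding feasible_schedule_def S_def by blast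
  then have "p \<in> S" "q \<in> S"
    by simp_all
  then have "\<sigma> ! p = i" "\<sigma> ! q = i"
    unfolding S_def by simp_all
  moreover have "Min S = p" "Max S = q"
    using pq(1,2) by auto
  ultimately show ?thesis
    using pq by (simp add: deadline_def)
qed

(* The first visits of A and the second visits of J are distinct positions among the first T. *)
lemma feasible_card_le:
  assumes fs: "feasible_schedule ds \<sigma>"
    and A: "A \<subseteq> {1..length ds}" and J: "J \<subseteq> {1..length ds}"
    and dA: "\<forall>i\<in>A. deadline ds i \<le> T" and dJ: "\<forall>i\<in>J. 2 * deadline ds i \<le> T"
  shows "card A + card J \<le> T"
proof -
  define fst_visit where "fst_visit i = Min {k. k < length \<sigma> \<and> \<sigma> ! k = i}" for i
  define snd_visit where "snd_visit i = Max {k. k < length \<sigma> \<and> \<sigma> ! k = i}" for i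
  have visit: "fst_visit i < snd_visit i \<and> \<sigma> ! fst_visit i = i \<and> \<sigma> ! snd_visit i = i \<and>
      fst_visit i < deadline ds i \<and> snd_visit i - fst_visit i \<le> deadline ds i"
    if "i \<in> {1..length ds}" for i
    unfolding fst_visit_def snd_visit_def by (rule feasible_visits[OF fs that])
  have inj: "inj_on fst_visit A" "inj_on snd_visit J"
    by (rule inj_onI, metis A visit subsetD, rule inj_onI, metis J visit subsetD)
  have disjoint: "fst_visit ` A \<inter> snd_visit ` J = {}"
  proof -
    have "fst_visit i \<noteq> snd_visit j" if "i \<in> A" "j \<in> J" for i j
    proof -
      have "\<sigma> ! fst_visit i = i" "\<sigma> ! snd_visit j = j" "fst_visit j < snd_visit j"
        using visit that A J by blast+
      then show ?thesis by auto
    qed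
    then show ?thesis by blast
  qed
  have early: "fst_visit ` A \<union> snd_visit ` J \<subseteq> {..<T}"
  proof -
    have "fst_visit i < T" if "i \<in> A" for i
    proof -
      have "fst_visit i < deadline ds i" using visit that A by blast
      then show ?thesis using dA that by fastforce
    qed
    moreover have "snd_visit j < T" if "j \<in> J" for j
    proof -
      have "fst_visit j < deadline ds j" "snd_visit j - fst_visit j \<le> deadline ds j"
        using visit that J by blast+
      then show ?thesis using dJ that by fastforce
    qed
    ultimately show ?thesis by blast
  qed
  have "finite A" "finite J"
    using A J finite_subset by blast+
  then have "card A + card J = card (fst_visit ` A \<union> snd_visit ` J)"
    by (simp add: card_Un_disjoint disjoint card_image inj)
  also have "\<dots> \<le> T"
    using card_mono[OF finite_lessThan early] by simp
  finally show ?thesis .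
qed

definition visits :: "(nat \<Rightarrow> nat) \<Rightarrow> nat \<Rightarrow> nat \<Rightarrow> nat set" where
  "visits s T i = {q \<in> {1..T}. s q = i}"

lemma visits_fun_upd_Suc [simp]:
  "visits (s(Suc T := x)) (Suc T) i = visits s T i \<union> (if x = i then {Suc T} else {})"
  by (auto simp: visits_def)

(* (a, b, f, s): the first visits of 1..a and the second visits of 1..b fill positions
   1..a+b, node i is first visited at position f i, and position q is visited by node s q. *)
type_synonym greedy_state = "nat \<times> nat \<times> (nat \<Rightarrow> nat) \<times> (nat \<Rightarrow> nat)"

definition second_visit_due :: "nat list \<Rightarrow> nat \<Rightarrow> nat \<Rightarrow> bool" where
  "second_visit_due ds a b \<longleftrightarrow> b < a \<and> (a = length ds \<or> a + b + 1 < deadline ds (a + 1))"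

fun greedy_step :: "nat list \<Rightarrow> greedy_state \<Rightarrow> greedy_state option" where
  "greedy_step ds (a, b, f, s) =
     (if second_visit_due ds a b then
        if a + b + 1 - f (b + 1) \<le> deadline ds (b + 1)
        then Some (a, b + 1, f, s(a + b + 1 := b + 1)) else None
      else Some (a + 1, b, f(a + 1 := a + b + 1), s(a + b + 1 := a + 1)))"

fun greedy_run :: "nat list \<Rightarrow> nat \<Rightarrow> greedy_state \<Rightarrow> greedy_state option" where
  "greedy_run ds 0 st = Some st"
| "greedy_run ds (Suc k) st = Option.bind (greedy_step ds st) (greedy_run ds k)"

definition greedy :: "nat list \<Rightarrow> greedy_state option" where
  "greedy ds = greedy_run ds (2 * length ds) (0, 0, \<lambda>_. 0, \<lambda>_. 0)"

(* A first visit is made before its deadline only when no second visit is pending, so every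
   pending node except possibly the oldest one was first visited exactly at its deadline. *)
fun greedy_inv :: "nat list \<Rightarrow> greedy_state \<Rightarrow> bool" where
  "greedy_inv ds (a, b, f, s) \<longleftrightarrow>
     b \<le> a \<and> a \<le> length ds \<and>
     (\<forall>q\<in>{1..a + b}. s q \<in> {1..a}) \<and>
     (\<forall>i\<in>{1..a}. f i \<le> deadline ds i) \<and>
     (\<forall>i\<in>{1..b}. \<exists>q. f i < q \<and> q - f i \<le> deadline ds i \<and> visits s (a + b) i = {f i, q}) \<and>
     (\<forall>i\<in>{b<..a}. visits s (a + b) i = {f i}) \<and>
     (a < length ds \<longrightarrow> a + b < deadline ds (a + 1)) \<and>
     (\<forall>i\<in>{b + 1<..a}. f i = deadline ds i) \<and>
     (b < a \<longrightarrow> f (b + 1) = deadline ds (b + 1) \<or> a = b + 1 \<and> f (b + 1) = a + b)"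

declare greedy_inv.simps [simp del]

lemma greedy_inv_init: "strict_instance ds \<Longrightarrow> greedy_inv ds (0, 0, f, s)"
  using deadline_pos[of ds 1] by (cases ds) (auto simp: greedy_inv.simps)

lemma greedy_inv_second_visit:
  assumes inv: "greedy_inv ds (a, b, f, s)" and due: "second_visit_due ds a b"
    and in_time: "a + b + 1 - f (b + 1) \<le> deadline ds (b + 1)"
  shows "greedy_inv ds (a, b + 1, f, s(a + b + 1 := b + 1))"
proof -
  let ?s = "s(a + b + 1 := b + 1)"
  from inv have range: "\<forall>q\<in>{1..a + b}. s q \<in> {1..a}"
    and completed: "\<forall>i\<in>{1..b}. \<exists>q. f i < q \<and> q - f i \<le> deadline ds i \<and> visits s (a + b) i = {f i, q}"
    and pending: "\<forall>i\<in>{b<..a}. visits s (a + b) i = {f i}"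
    and at_deadline: "\<forall>i\<in>{b + 1<..a}. f i = deadline ds i"
    by (simp_all add: greedy_inv.simps)
  from due have "b < a" and next_late: "a = length ds \<or> a + b + 1 < deadline ds (a + 1)"
    by (simp_all add: second_visit_due_def)
  have oldest_visits: "visits s (a + b) (b + 1) = {f (b + 1)}"
    using pending \<open>b < a\<close> by simp
  then have "f (b + 1) \<le> a + b"
    by (auto simp: visits_def)
  have completed_next: "\<exists>q. f i < q \<and> q - f i \<le> deadline ds i \<and> visits ?s (a + (b + 1)) i = {f i, q}"
    if i: "i \<in> {1..b + 1}" for i
  proof (cases "i = b + 1")
    case True
    with oldest_visits \<open>f (b + 1) \<le> a + b\<close> in_time show ?thesis
      by (intro exI[of _ "a + b + 1"]) (simp add: insert_commute)
  next
    case False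
    with completed i show ?thesis
      by simp
  qed
  show ?thesis
    using inv range completed_next pending at_deadline next_late \<open>b < a\<close>
    by (auto simp: greedy_inv.simps)
qed

lemma greedy_first_visit_forced:
  assumes inv: "greedy_inv ds (a, b, f, s)" and todo: "a + b < 2 * length ds"
    and not_due: "\<not> second_visit_due ds a b"
  shows "a < length ds" and "a + b + 1 \<le> deadline ds (a + 1)"
    and "b < a \<Longrightarrow> deadline ds (a + 1) = a + b + 1"
proof -
  from inv have "b \<le> a" "a \<le> length ds" and next_first: "a < length ds \<longrightarrow> a + b < deadline ds (a + 1)"
    by (simp_all add: greedy_inv.simps)
  with not_due todo show "a < length ds"
    by (auto simp: second_visit_due_def)
  with next_first show in_time: "a + b + 1 \<le> deadline ds (a + 1)"
    by simp
  show "deadline ds (a + 1) = a + b + 1" if "b < a"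
    using not_due that in_time \<open>a < length ds\<close> by (auto simp: second_visit_due_def)
qed

lemma greedy_inv_oldest_at_deadline:
  assumes strict: "strict_instance ds" and inv: "greedy_inv ds (a, b, f, s)"
    and "b < a" "a < length ds" and forced: "deadline ds (a + 1) = a + b + 1"
  shows "f (b + 1) = deadline ds (b + 1)"
proof (rule ccontr)
  from inv have first: "\<forall>i\<in>{1..a}. f i \<le> deadline ds i"
    and oldest: "b < a \<longrightarrow> f (b + 1) = deadline ds (b + 1) \<or> a = b + 1 \<and> f (b + 1) = a + b"
    by (simp_all add: greedy_inv.simps)
  assume early: "f (b + 1) \<noteq> deadline ds (b + 1)"
  with oldest \<open>b < a\<close> have "a = b + 1" "f (b + 1) = a + b"
    by auto
  moreover have "deadline ds (b + 1) < deadline ds (a + 1)"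
    using deadline_strict_mono[OF strict, of "b + 1" "a + 1"] \<open>b < a\<close> \<open>a < length ds\<close> by simp
  moreover have "f (b + 1) \<le> deadline ds (b + 1)"
    using first \<open>b < a\<close> by simp
  ultimately show False
    using early forced by simp
qed

lemma greedy_inv_first_visit:
  assumes strict: "strict_instance ds" and inv: "greedy_inv ds (a, b, f, s)"
    and todo: "a + b < 2 * length ds" and not_due: "\<not> second_visit_due ds a b"
  shows "greedy_inv ds (a + 1, b, f(a + 1 := a + b + 1), s(a + b + 1 := a + 1))"
proof -
  let ?f = "f(a + 1 := a + b + 1)" and ?s = "s(a + b + 1 := a + 1)"
  from inv have "b \<le> a" and range: "\<forall>q\<in>{1..a + b}. s q \<in> {1..a}"
    and first: "\<forall>i\<in>{1..a}. f i \<le> deadline ds i"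
    and completed: "\<forall>i\<in>{1..b}. \<exists>q. f i < q \<and> q - f i \<le> deadline ds i \<and> visits s (a + b) i = {f i, q}"
    and pending: "\<forall>i\<in>{b<..a}. visits s (a + b) i = {f i}"
    and at_deadline: "\<forall>i\<in>{b + 1<..a}. f i = deadline ds i"
    by (simp_all add: greedy_inv.simps)
  note forced = greedy_first_visit_forced[OF inv todo not_due]
  have unvisited: "visits s (a + b) (a + 1) = {}"
    using range by (force simp: visits_def)
  have range_next: "\<forall>q\<in>{1..a + 1 + b}. ?s q \<in> {1..a + 1}"
    using range by (auto simp: le_Suc_eq)
  have first_next: "\<forall>i\<in>{1..a + 1}. ?f i \<le> deadline ds i"
    using first forced(2) by auto
  have completed_next: "\<forall>i\<in>{1..b}. \<exists>q. ?f i < q \<and> q - ?f i \<le> deadline ds i \<and>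
      visits ?s (a + 1 + b) i = {?f i, q}"
    using completed \<open>b \<le> a\<close> by auto
  have pending_next: "\<forall>i\<in>{b<..a + 1}. visits ?s (a + 1 + b) i = {?f i}"
    using pending unvisited by auto
  have next_first_next: "a + 1 < length ds \<longrightarrow> a + 1 + b < deadline ds (a + 1 + 1)"
  proof
    assume "a + 1 < length ds"
    then have "deadline ds (a + 1) < deadline ds (a + 1 + 1)"
      using deadline_strict_mono[OF strict] by simp
    with forced(2) show "a + 1 + b < deadline ds (a + 1 + 1)"
      by simp
  qed
  have at_deadline_next: "\<forall>i\<in>{b + 1<..a + 1}. ?f i = deadline ds i"
    using at_deadline forced(3) by auto
  have oldest_next: "?f (b + 1) = deadline ds (b + 1) \<or> a + 1 = b + 1 \<and> ?f (b + 1) = a + 1 + b"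
    using greedy_inv_oldest_at_deadline[OF strict inv _ forced(1,3)] \<open>b \<le> a\<close>
    by (cases "b < a") simp_all
  have "b \<le> a + 1" "a + 1 \<le> length ds"
    using \<open>b \<le> a\<close> forced(1) by simp_all
  with range_next first_next completed_next pending_next next_first_next at_deadline_next
    oldest_next show ?thesis
    unfolding greedy_inv.simps by blast
qed

lemma greedy_step_inv:
  assumes strict: "strict_instance ds" and inv: "greedy_inv ds (a, b, f, s)"
    and todo: "a + b < 2 * length ds" and step: "greedy_step ds (a, b, f, s) = Some (a', b', f', s')"
  shows "greedy_inv ds (a', b', f', s') \<and> a' + b' = a + b + 1"
proof (cases "second_visit_due ds a b")
  case True
  with step have in_time: "a + b + 1 - f (b + 1) \<le> deadline ds (b + 1)"
    by (auto split: if_splits)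
  with step True have "a' = a" "b' = b + 1" "f' = f" "s' = s(a + b + 1 := b + 1)"
    by auto
  then show ?thesis
    using greedy_inv_second_visit[OF inv True in_time] by simp
next
  case False
  with step have "a' = a + 1" "b' = b" "f' = f(a + 1 := a + b + 1)" "s' = s(a + b + 1 := a + 1)"
    by auto
  then show ?thesis
    using greedy_inv_first_visit[OF strict inv todo False] by simp
qed

lemma greedy_step_None_infeasible:
  assumes strict: "strict_instance ds" and inv: "greedy_inv ds (a, b, f, s)"
    and fail: "greedy_step ds (a, b, f, s) = None"
  shows "\<not> has_feasible_schedule ds"
proof
  assume "has_feasible_schedule ds"
  then obtain \<sigma> where feasible: "feasible_schedule ds \<sigma>"
    unfolding has_feasible_schedule_def ..
  from inv have "a \<le> length ds"
    and pending: "\<forall>i\<in>{b<..a}. visits s (a + b) i = {f i}"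
    and at_deadline: "\<forall>i\<in>{b + 1<..a}. f i = deadline ds i"
    and oldest: "b < a \<longrightarrow> f (b + 1) = deadline ds (b + 1) \<or> a = b + 1 \<and> f (b + 1) = a + b"
    by (simp_all add: greedy_inv.simps)
  from fail have "b < a" and late: "deadline ds (b + 1) < a + b + 1 - f (b + 1)"
    by (auto simp: second_visit_due_def split: if_splits)
  have "0 < deadline ds (b + 1)"
    using deadline_pos[OF strict] \<open>b < a\<close> \<open>a \<le> length ds\<close> by simp
  with oldest \<open>b < a\<close> late have "f (b + 1) = deadline ds (b + 1)"
    by auto
  with late have oldest_late: "2 * deadline ds (b + 1) \<le> a + b"
    by simp
  have "deadline ds i \<le> a + b" if i: "i \<in> {1..a}" for i
  proof (cases "i \<le> b + 1")
    case True
    then have "deadline ds i \<le> deadline ds (b + 1)"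
      using deadline_mono[OF strict] i \<open>b < a\<close> \<open>a \<le> length ds\<close> by simp
    with oldest_late show ?thesis
      by simp
  next
    case False
    with pending i have "f i \<in> visits s (a + b) i"
      by simp
    with at_deadline False i show ?thesis
      by (simp add: visits_def)
  qed
  moreover have "2 * deadline ds i \<le> a + b" if i: "i \<in> {1..b + 1}" for i
    using deadline_mono[OF strict, of i "b + 1"] i \<open>b < a\<close> \<open>a \<le> length ds\<close> oldest_late
    by simp
  ultimately have "card {1..a} + card {1..b + 1} \<le> a + b"
    using feasible_card_le[OF feasible, of "{1..a}" "{1..b + 1}" "a + b"] \<open>b < a\<close> \<open>a \<le> length ds\<close>
    by auto
  then show False
    by simp
qed

lemma greedy_run_correct:
  assumes strict: "strict_instance ds"
  shows "greedy_inv ds (a, b, f, s) \<Longrightarrow> a + b + k \<le> 2 * length ds \<Longrightarrow>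
    (case greedy_run ds k (a, b, f, s) of
       None \<Rightarrow> \<not> has_feasible_schedule ds
     | Some (a', b', f', s') \<Rightarrow> greedy_inv ds (a', b', f', s') \<and> a' + b' = a + b + k)"
proof (induction k arbitrary: a b f s)
  case 0
  then show ?case
    by simp
next
  case (Suc k)
  show ?case
  proof (cases "greedy_step ds (a, b, f, s)")
    case None
    with greedy_step_None_infeasible[OF strict Suc.prems(1)] show ?thesis
      by simp
  next
    case (Some st)
    obtain a' b' f' s' where st: "st = (a', b', f', s')"
      by (cases st)
    with greedy_step_inv[OF strict Suc.prems(1)] Some Suc.prems(2)
    have inv': "greedy_inv ds (a', b', f', s')" and progress: "a' + b' = a + b + 1"
      by auto
    have run: "greedy_run ds (Suc k) (a, b, f, s) = greedy_run ds k (a', b', f', s')"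
      using Some st by simp
    have steps: "a + b + Suc k = a' + b' + k"
      using progress by simp
    show ?thesis
      unfolding run steps using Suc.IH[OF inv'] Suc.prems(2) progress by simp
  qed
qed

lemma nth_positions_visits:
  "{k. k < length (map (\<lambda>q. s (q + 1)) [0..<T]) \<and> map (\<lambda>q. s (q + 1)) [0..<T] ! k = i} =
    (\<lambda>q. q - 1) ` visits s T i"
proof (rule set_eqI)
  fix k
  have "k \<in> {k. k < length (map (\<lambda>q. s (q + 1)) [0..<T]) \<and> map (\<lambda>q. s (q + 1)) [0..<T] ! k = i} \<longleftrightarrow>
      k + 1 \<in> visits s T i"
    by (cases "k < T") (simp_all add: visits_def Suc_le_eq)
  also have "\<dots> \<longleftrightarrow> k \<in> (\<lambda>q. q - 1) ` visits s T i"
    by (force simp: visits_def)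
  finally show "k \<in> {k. k < length (map (\<lambda>q. s (q + 1)) [0..<T]) \<and> map (\<lambda>q. s (q + 1)) [0..<T] ! k = i} \<longleftrightarrow>
      k \<in> (\<lambda>q. q - 1) ` visits s T i" .
qed

lemma greedy_inv_feasible:
  assumes inv: "greedy_inv ds (a, b, f, s)" and full: "a + b = 2 * length ds"
  shows "feasible_schedule ds (map (\<lambda>q. s (q + 1)) [0..<2 * length ds])"
proof -
  let ?n = "length ds" and ?\<sigma> = "map (\<lambda>q. s (q + 1)) [0..<2 * length ds]"
  from inv have "b \<le> a" "a \<le> ?n"
    and range: "\<forall>q\<in>{1..a + b}. s q \<in> {1..a}"
    and first: "\<forall>i\<in>{1..a}. f i \<le> deadline ds i"
    and completed: "\<forall>i\<in>{1..b}. \<exists>q. f i < q \<and> q - f i \<le> deadline ds i \<and> visits s (a + b) i = {f i, q}"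
    by (simp_all add: greedy_inv.simps)
  with full have "a = ?n" "b = ?n"
    by simp_all
  have "set ?\<sigma> \<subseteq> {1..?n}"
    using range full \<open>a = ?n\<close> by auto
  moreover have "\<exists>p q. p < q \<and> q < length ?\<sigma> \<and> {k. k < length ?\<sigma> \<and> ?\<sigma> ! k = i} = {p, q} \<and>
      p + 1 \<le> ds ! (i - 1) \<and> q - p \<le> ds ! (i - 1)" if i: "i \<in> {1..?n}" for i
  proof -
    from i \<open>b = ?n\<close> have "i \<in> {1..b}"
      by simp
    with completed obtain q where q: "f i < q" "q - f i \<le> deadline ds i"
      and vis_ab: "visits s (a + b) i = {f i, q}"
      by blast
    from vis_ab have vis: "visits s (2 * ?n) i = {f i, q}"
      unfolding full .
    then have "f i \<in> visits s (2 * ?n) i" "q \<in> visits s (2 * ?n) i"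
      by simp_all
    then have "1 \<le> f i" "q \<le> 2 * ?n"
      unfolding visits_def by simp_all
    have positions: "{k. k < length ?\<sigma> \<and> ?\<sigma> ! k = i} = {f i - 1, q - 1}"
      using nth_positions_visits[of s "2 * ?n" i] vis by simp
    have "f i \<le> deadline ds i"
      using first i \<open>a = ?n\<close> by simp
    with q \<open>1 \<le> f i\<close> \<open>q \<le> 2 * ?n\<close>
    have "f i - 1 < q - 1" "q - 1 < length ?\<sigma>"
      "f i - 1 + 1 \<le> ds ! (i - 1)" "q - 1 - (f i - 1) \<le> ds ! (i - 1)"
      by (simp_all add: deadline_def)
    with positions show ?thesis
      by blast
  qed
  ultimately show ?thesis
    unfolding feasible_schedule_def by simp
qed

lemma greedy_None_infeasible:
  "strict_instance ds \<Longrightarrow> greedy ds = None \<Longrightarrow> \<not> has_feasible_schedule ds"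
  using greedy_run_correct[of ds 0 0 "\<lambda>_. 0" "\<lambda>_. 0" "2 * length ds"] greedy_inv_init
  by (simp add: greedy_def)

lemma greedy_Some_feasible:
  assumes "strict_instance ds" and "greedy ds = Some (a, b, f, s)"
  shows "a = length ds \<and> b = length ds \<and>
    feasible_schedule ds (map (\<lambda>q. s (q + 1)) [0..<2 * length ds])"
proof -
  have inv: "greedy_inv ds (a, b, f, s)" and full: "a + b = 2 * length ds"
    using greedy_run_correct[of ds 0 0 "\<lambda>_. 0" "\<lambda>_. 0" "2 * length ds"] greedy_inv_init assms
    by (simp_all add: greedy_def)
  moreover from inv have "b \<le> a" "a \<le> length ds"
    by (simp_all add: greedy_inv.simps)
  ultimately show ?thesis
    using greedy_inv_feasible by simp
qed

section \<open>Bounded runs of the machine\<close>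

lemma run_0 [simp]: "run P 0 c = c"
  by (simp add: run_def)

lemma run_Suc: "run P (Suc t) c = run P t (step P c)"
  by (simp only: run_def funpow_Suc_right comp_def)

lemma run_numeral: "run P (numeral k) c = run P (pred_numeral k) (step P c)"
  by (simp add: numeral_eq_Suc run_Suc)

lemma run_add: "run P (t1 + t2) c = run P t2 (run P t1 c)"
  by (simp only: run_def add.commute[of t1 t2] funpow_add comp_def)

definition reaches :: "instr list \<Rightarrow> nat \<Rightarrow> config \<Rightarrow> (config \<Rightarrow> bool) \<Rightarrow> bool" where
  "reaches P T c Q \<longleftrightarrow> (\<exists>t\<le>T. Q (run P t c))"

definition at_pc :: "nat \<Rightarrow> ((nat \<Rightarrow> nat) \<Rightarrow> bool) \<Rightarrow> config \<Rightarrow> bool" where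
  "at_pc l R c \<longleftrightarrow> fst c = l \<and> R (snd c)"

lemma reachesI: "Q (run P t c) \<Longrightarrow> t \<le> T \<Longrightarrow> reaches P T c Q"
  unfolding reaches_def by blast

lemma reaches_refl: "Q c \<Longrightarrow> reaches P T c Q"
  by (rule reachesI[of _ _ 0]) simp_all

lemma reaches_mono: "reaches P T c Q \<Longrightarrow> T \<le> T' \<Longrightarrow> (\<And>c. Q c \<Longrightarrow> R c) \<Longrightarrow> reaches P T' c R"
  unfolding reaches_def by (meson order_trans)

lemma reaches_trans:
  assumes "reaches P T1 c Q" and "\<And>c'. Q c' \<Longrightarrow> reaches P T2 c' R"
  shows "reaches P (T1 + T2) c R"
proof -
  obtain t1 where "t1 \<le> T1" "Q (run P t1 c)"
    using assms(1) unfolding reaches_def by blast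
  moreover obtain t2 where "t2 \<le> T2" "R (run P t2 (run P t1 c))"
    using assms(2)[OF \<open>Q (run P t1 c)\<close>] unfolding reaches_def by blast
  ultimately show ?thesis
    by (intro reachesI[of _ _ "t1 + t2"]) (simp_all add: run_add)
qed

lemma reaches_seq:
  assumes "reaches P T1 c (at_pc l R)" and "\<And>M. R M \<Longrightarrow> reaches P T2 (l, M) Q"
  shows "reaches P (T1 + T2) c Q"
proof (rule reaches_trans[OF assms(1)])
  fix c' assume "at_pc l R c'"
  then show "reaches P T2 c' Q"
    using assms(2) by (cases c') (simp add: at_pc_def)
qed

lemma reaches_loop:
  assumes body: "\<And>k M. I (Suc k) M \<Longrightarrow> reaches P c (l, M) (\<lambda>c'. at_pc l (I k) c' \<or> Q c')"
    and exit: "\<And>M. I 0 M \<Longrightarrow> reaches P e (l, M) Q"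
  shows "I k M \<Longrightarrow> reaches P (c * k + e) (l, M) Q"
proof (induction k arbitrary: M)
  case 0
  then show ?case
    by (simp add: exit)
next
  case (Suc k)
  have "reaches P (c + (c * k + e)) (l, M) Q"
  proof (rule reaches_trans[OF body[OF Suc.prems]])
    fix c' assume "at_pc l (I k) c' \<or> Q c'"
    then show "reaches P (c * k + e) c' Q"
      using Suc.IH reaches_refl by (cases c') (auto simp: at_pc_def)
  qed
  then show ?case
    by (simp add: add.assoc)
qed

lemma reaches_at_pcI:
  "\<exists>M'. run P t c = (l, M') \<and> R M' \<Longrightarrow> t \<le> T \<Longrightarrow> reaches P T c (at_pc l R)"
  unfolding reaches_def at_pc_def by force

lemma reaches_continueI:
  "\<exists>M'. run P t (l, M) = (l, M') \<and> R M' \<Longrightarrow> t \<le> T \<Longrightarrow> reaches P T (l, M) (\<lambda>c. at_pc l R c \<or> Q c)"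
  unfolding reaches_def at_pc_def by force

section \<open>A linear-time program\<close>

(* Registers 1..13 are the work registers but initially hold d_1..d_13.  Instructions 0-62 park
   these at Z..Z+12 and n at Z+13, where Z = n + d_1 if n >= 13 (register 13 is nonzero iff
   n >= 13) and Z = 26 otherwise.  Instructions 63-93 copy the deadlines to B+1..B+n, B = Z + 13.
   The greedy loop at 94 keeps a, b, a + b + 1 in registers 9, 10, 11, the first-visit positions
   at B+n+1.. and the schedule at B+2n+1..; it jumps to 127 when a second visit is late and to
   129 when the schedule is complete, which 129-165 then copy to registers 1..2n, the work
   registers last.  Registers 7 and 8 hold 1 and 0, so Jz 8 l is an unconditional jump. *)
definition prog :: "instr list" where
  "prog = [
    Jz 13 36,
    Add 0 0 1, Write 0 1, LoadC 1 1,
    Add 0 0 1, Write 0 2, Add 0 0 1, Write 0 3, Add 0 0 1, Write 0 4,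
    Add 0 0 1, Write 0 5, Add 0 0 1, Write 0 6, Add 0 0 1, Write 0 7,
    Add 0 0 1, Write 0 8, Add 0 0 1, Write 0 9, Add 0 0 1, Write 0 10,
    Add 0 0 1, Write 0 11, Add 0 0 1, Write 0 12, Add 0 0 1, Write 0 13,
    LoadC 2 12, Sub 2 0 2, Read 3 2, Sub 3 2 3, Add 5 0 1, Write 5 3, LoadC 8 0, Jz 8 63,
    LoadC 13 26, Write 13 1, LoadC 13 27, Write 13 2, LoadC 13 28, Write 13 3,
    LoadC 13 29, Write 13 4, LoadC 13 30, Write 13 5, LoadC 13 31, Write 13 6,
    LoadC 13 32, Write 13 7, LoadC 13 33, Write 13 8, LoadC 13 34, Write 13 9,
    LoadC 13 35, Write 13 10, LoadC 13 36, Write 13 11, LoadC 13 37, Write 13 12,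
    LoadC 13 39, Write 13 0, LoadC 2 26,
    LoadC 7 1, LoadC 8 0, LoadC 6 13, Add 4 2 6, Read 3 4, LoadC 1 1,
    LoadC 6 14, Sub 5 6 1, Jz 5 79, Add 5 2 1, Sub 5 5 7, Read 5 5, Add 6 4 1, Write 6 5,
    Add 1 1 7, Jz 8 69,
    Add 6 3 7, Sub 5 6 1, Jz 5 87, Read 5 1, Add 6 4 1, Write 6 5, Add 1 1 7, Jz 8 79,
    LoadC 9 0, LoadC 10 0, LoadC 11 1, Add 12 4 3, Add 13 12 3, Add 2 3 3, Add 2 2 7,
    Sub 5 2 11, Jz 5 129,
    Sub 5 9 10, Jz 5 119, Sub 5 3 9, Jz 5 105,
    Add 6 4 9, Add 6 6 7, Read 5 6, Sub 5 5 11, Jz 5 119,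
    Add 1 10 7, Add 6 12 1, Read 5 6, Sub 5 11 5, Add 6 4 1, Read 6 6, Sub 5 5 6, Jz 5 114,
    Jz 8 127,
    Add 6 13 11, Write 6 1, Add 10 10 7, Add 11 11 7, Jz 8 94,
    Add 1 9 7, Add 6 12 1, Write 6 11, Add 6 13 11, Write 6 1, Add 9 9 7, Add 11 11 7, Jz 8 94,
    LoadC 0 0, Jz 0 166,
    Add 1 3 3, LoadC 2 13,
    Sub 5 1 2, Jz 5 138, Add 6 13 1, Read 5 6, Write 1 5, Sub 1 1 7, Jz 8 131,
    Add 0 13 2, LoadC 1 1,
    Read 13 0, Sub 0 0 1, Read 12 0, Sub 0 0 1, Read 11 0, Sub 0 0 1, Read 10 0, Sub 0 0 1,
    Read 9 0, Sub 0 0 1, Read 8 0, Sub 0 0 1, Read 7 0, Sub 0 0 1, Read 6 0, Sub 0 0 1,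
    Read 5 0, Sub 0 0 1, Read 4 0, Sub 0 0 1, Read 3 0, Sub 0 0 1, Read 2 0, Sub 0 0 1,
    Read 1 0, LoadC 0 1]"

lemmas prog_nth = arg_cong[where f = "\<lambda>xs. xs ! k" for k, OF prog_def]

lemma length_prog [simp]: "length prog = 166"
  by (simp add: prog_def)

lemma step_prog [simp]: "pc < 166 \<Longrightarrow> step prog (pc, M) = exec (prog ! pc) (pc, M)"
  by (simp add: step_def halted_def)

lemmas run_prog_simps = run_Suc run_numeral prog_nth

lemma input_mem_deadline: "1 \<le> j \<Longrightarrow> j \<le> length ds \<Longrightarrow> input_mem ds j = deadline ds j"
  by (simp add: input_mem_def deadline_def)

definition parked :: "nat list \<Rightarrow> nat \<Rightarrow> (nat \<Rightarrow> nat) \<Rightarrow> bool" where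
  "parked ds Z M \<longleftrightarrow> M 2 = Z \<and> length ds < Z \<and> 13 < Z \<and>
     (\<forall>k. k < 13 \<longrightarrow> M (Z + k) = input_mem ds (k + 1)) \<and> M (Z + 13) = length ds \<and>
     (\<forall>i. 13 < i \<and> i \<le> length ds \<longrightarrow> M i = input_mem ds i)"

lemma less_13_cases: "(k::nat) < 13 \<longleftrightarrow> k = 0 \<or> k = 1 \<or> k = 2 \<or> k = 3 \<or> k = 4 \<or> k = 5 \<or> k = 6 \<or>
   k = 7 \<or> k = 8 \<or> k = 9 \<or> k = 10 \<or> k = 11 \<or> k = 12"
  by presburger

lemma park_small:
  assumes "length ds < 13"
  shows "reaches prog 28 (0, input_mem ds) (at_pc 63 (parked ds 26))"
proof (rule reaches_at_pcI)
  have "input_mem ds 0 = length ds" "input_mem ds 13 = 0" "input_mem ds 38 = 0"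
    using assms by (auto simp: input_mem_def)
  with assms show "\<exists>M'. run prog 28 (0, input_mem ds) = (63, M') \<and> parked ds 26 M'"
    unfolding parked_def
    by (simp add: run_prog_simps less_13_cases numeral_2_eq_2[symmetric]) auto
qed simp

lemma park_large:
  assumes strict: "strict_instance ds" and large: "13 \<le> length ds"
  shows "reaches prog 36 (0, input_mem ds) (at_pc 63 (parked ds (length ds + input_mem ds 1)))"
proof (rule reaches_at_pcI)
  have "input_mem ds 0 = length ds"
    by (simp add: input_mem_def)
  have "0 < input_mem ds 13" "0 < input_mem ds 1"
    using large deadline_pos[OF strict, of 13] deadline_pos[OF strict, of 1]
    by (simp_all add: input_mem_deadline)
  then have "run prog 1 (0, input_mem ds) = (1, input_mem ds)"
    by (simp add: run_prog_simps)
  moreover have "\<exists>M'. run prog 35 (1, input_mem ds) = (63, M') \<and>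
      parked ds (length ds + input_mem ds 1) M'"
    using large \<open>0 < input_mem ds 1\<close> \<open>input_mem ds 0 = length ds\<close> unfolding parked_def
    by (simp add: run_prog_simps numeral_2_eq_2[symmetric], intro allI impI, simp add: add.commute, arith)
  ultimately show "\<exists>M'. run prog 36 (0, input_mem ds) = (63, M') \<and>
      parked ds (length ds + input_mem ds 1) M'"
    using run_add[of prog 1 35] by simp
qed simp

lemma park:
  assumes "strict_instance ds"
  shows "reaches prog 36 (0, input_mem ds) (at_pc 63 (\<lambda>M. \<exists>Z. parked ds Z M))"
proof (cases "length ds < 13")
  case True
  show ?thesis
    by (rule reaches_mono[OF park_small[OF True]]) (auto simp: at_pc_def)
next
  case False
  show ?thesis
    by (rule reaches_mono[OF park_large[OF assms]]) (use False in \<open>auto simp: at_pc_def\<close>)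
qed

definition copy_parked_inv :: "nat list \<Rightarrow> nat \<Rightarrow> nat \<Rightarrow> (nat \<Rightarrow> nat) \<Rightarrow> bool" where
  "copy_parked_inv ds Z i M \<longleftrightarrow> M 1 = i \<and> 1 \<le> i \<and> i \<le> 14 \<and> M 2 = Z \<and> M 3 = length ds \<and>
     M 4 = Z + 13 \<and> M 7 = 1 \<and> M 8 = 0 \<and> length ds < Z \<and> 13 < Z \<and>
     (\<forall>k. k < 13 \<longrightarrow> M (Z + k) = input_mem ds (k + 1)) \<and>
     (\<forall>i'. 13 < i' \<and> i' \<le> length ds \<longrightarrow> M i' = input_mem ds i') \<and>
     (\<forall>j. 1 \<le> j \<and> j < i \<longrightarrow> M (Z + 13 + j) = input_mem ds j)"

definition copy_rest_inv :: "nat list \<Rightarrow> nat \<Rightarrow> nat \<Rightarrow> (nat \<Rightarrow> nat) \<Rightarrow> bool" where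
  "copy_rest_inv ds Z i M \<longleftrightarrow> M 1 = i \<and> 14 \<le> i \<and> M 3 = length ds \<and> M 4 = Z + 13 \<and>
     M 7 = 1 \<and> M 8 = 0 \<and> length ds < Z \<and> 13 < Z \<and>
     (\<forall>i'. 13 < i' \<and> i' \<le> length ds \<longrightarrow> M i' = input_mem ds i') \<and>
     (\<forall>j. 1 \<le> j \<and> j < i \<longrightarrow> M (Z + 13 + j) = input_mem ds j)"

definition deadlines_stored :: "nat list \<Rightarrow> nat \<Rightarrow> (nat \<Rightarrow> nat) \<Rightarrow> bool" where
  "deadlines_stored ds B M \<longleftrightarrow> M 3 = length ds \<and> M 4 = B \<and> M 7 = 1 \<and> M 8 = 0 \<and> 13 < B \<and>
     (\<forall>j. 1 \<le> j \<and> j \<le> length ds \<longrightarrow> M (B + j) = input_mem ds j)"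

lemma copy_init: "parked ds Z M \<Longrightarrow> reaches prog 6 (63, M) (at_pc 69 (copy_parked_inv ds Z 1))"
  by (rule reaches_at_pcI[where t = 6]) (simp_all add: parked_def copy_parked_inv_def run_prog_simps)

lemma copy_parked_step:
  assumes inv: "copy_parked_inv ds Z i M" and i: "i \<le> 13"
  shows "\<exists>M'. run prog 10 (69, M) = (69, M') \<and> copy_parked_inv ds Z (i + 1) M'"
proof -
  from inv have "1 \<le> i" and parked: "\<forall>k. k < 13 \<longrightarrow> M (Z + k) = input_mem ds (k + 1)"
    unfolding copy_parked_inv_def by simp_all
  with i have "M (Z + i - 1) = input_mem ds i"
    using parked[rule_format, of "i - 1"] by simp
  with inv i show ?thesis
    unfolding copy_parked_inv_def by (simp add: run_prog_simps) (auto simp: less_Suc_eq)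
qed

lemma copy_parked:
  assumes "copy_parked_inv ds Z 1 M"
  shows "reaches prog (10 * 13 + 3) (69, M) (at_pc 79 (copy_rest_inv ds Z 14))"
proof -
  let ?I = "\<lambda>k M. k \<le> 13 \<and> copy_parked_inv ds Z (14 - k) M"
  have body: "reaches prog 10 (69, M') (\<lambda>c. at_pc 69 (?I k) c \<or> at_pc 79 (copy_rest_inv ds Z 14) c)"
    if "?I (Suc k) M'" for k M'
  proof -
    from that have "k \<le> 12" and inv: "copy_parked_inv ds Z (13 - k) M'"
      by simp_all
    with copy_parked_step[OF inv] obtain M'' where "run prog 10 (69, M') = (69, M'')"
      and "copy_parked_inv ds Z (13 - k + 1) M''"
      by auto
    moreover have "13 - k + 1 = 14 - k"
      using \<open>k \<le> 12\<close> by simp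
    ultimately show ?thesis
      using \<open>k \<le> 12\<close> by (intro reaches_continueI[where t = 10]) auto
  qed
  have exit: "reaches prog 3 (69, M') (at_pc 79 (copy_rest_inv ds Z 14))" if "?I 0 M'" for M'
    using that
    by (intro reaches_at_pcI[where t = 3]) (simp_all add: copy_parked_inv_def copy_rest_inv_def run_prog_simps)
  from assms have "?I 13 M"
    by simp
  from reaches_loop[where I = ?I, OF body exit this] show ?thesis .
qed

lemma copy_rest_step:
  assumes "copy_rest_inv ds Z i M" and "i \<le> length ds"
  shows "\<exists>M'. run prog 8 (79, M) = (79, M') \<and> copy_rest_inv ds Z (i + 1) M'"
  using assms unfolding copy_rest_inv_def by (simp add: run_prog_simps)

lemma copy_rest:
  assumes "copy_rest_inv ds Z 14 M"
  shows "reaches prog (8 * (length ds + 1 - 14) + 3) (79, M) (at_pc 87 (deadlines_stored ds (Z + 13)))"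
proof -
  let ?I = "\<lambda>k M. \<exists>i. length ds + 1 - i = k \<and> copy_rest_inv ds Z i M"
  have body: "reaches prog 8 (79, M') (\<lambda>c. at_pc 79 (?I k) c \<or> at_pc 87 (deadlines_stored ds (Z + 13)) c)"
    if "?I (Suc k) M'" for k M'
  proof -
    from that obtain i where "length ds + 1 - i = Suc k" "copy_rest_inv ds Z i M'"
      by blast
    with copy_rest_step[of ds Z i M'] show ?thesis
      by (intro reaches_continueI[where t = 8]) force+
  qed
  have exit: "reaches prog 3 (79, M') (at_pc 87 (deadlines_stored ds (Z + 13)))" if "?I 0 M'" for M'
    using that
    by (intro reaches_at_pcI[where t = 3]) (auto simp: copy_rest_inv_def deadlines_stored_def run_prog_simps)
  from assms have "?I (length ds + 1 - 14) M"
    by blast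
  from reaches_loop[where I = ?I, OF body exit this] show ?thesis .
qed

fun loop_inv :: "nat list \<Rightarrow> nat \<Rightarrow> greedy_state \<Rightarrow> (nat \<Rightarrow> nat) \<Rightarrow> bool" where
  "loop_inv ds B (a, b, f, s) M \<longleftrightarrow>
     M 2 = 2 * length ds + 1 \<and> M 3 = length ds \<and> M 4 = B \<and> M 7 = 1 \<and> M 8 = 0 \<and>
     M 9 = a \<and> M 10 = b \<and> M 11 = a + b + 1 \<and> M 12 = B + length ds \<and> M 13 = B + 2 * length ds \<and>
     13 < B \<and> b \<le> a \<and> a \<le> length ds \<and>
     (\<forall>i. 1 \<le> i \<and> i \<le> length ds \<longrightarrow> M (B + i) = deadline ds i) \<and>
     (\<forall>j. 1 \<le> j \<and> j \<le> a \<longrightarrow> M (B + length ds + j) = f j) \<and>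
     (\<forall>q. 1 \<le> q \<and> q \<le> a + b \<longrightarrow> M (B + 2 * length ds + q) = s q)"

lemma loop_init:
  "deadlines_stored ds B M \<Longrightarrow> reaches prog 7 (87, M) (at_pc 94 (loop_inv ds B (0, 0, f, s)))"
  by (rule reaches_at_pcI[where t = 7])
    (simp_all add: deadlines_stored_def input_mem_deadline run_prog_simps)

lemma copy_deadlines:
  assumes "parked ds Z M"
  shows "reaches prog (8 * length ds + 149) (63, M) (at_pc 94 (loop_inv ds (Z + 13) (0, 0, f, s)))"
proof -
  have "reaches prog (6 + (10 * 13 + 3) + (8 * (length ds + 1 - 14) + 3) + 7) (63, M)
      (at_pc 94 (loop_inv ds (Z + 13) (0, 0, f, s)))"
  proof (rule reaches_seq[OF _ loop_init])
    show "reaches prog (6 + (10 * 13 + 3) + (8 * (length ds + 1 - 14) + 3)) (63, M)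
        (at_pc 87 (deadlines_stored ds (Z + 13)))"
      by (rule reaches_seq[OF reaches_seq[OF copy_init[OF assms] copy_parked] copy_rest])
  qed
  then show ?thesis
    by (rule reaches_mono) simp_all
qed

lemma loop_inv_lookups:
  assumes "loop_inv ds B (a, b, f, s) M"
  shows "a < length ds \<Longrightarrow> M (Suc (B + a)) = deadline ds (Suc a)"
    and "b < a \<Longrightarrow> M (Suc (B + length ds + b)) = f (Suc b)"
    and "b < length ds \<Longrightarrow> M (Suc (B + b)) = deadline ds (Suc b)"
proof -
  from assms have "\<forall>i. 1 \<le> i \<and> i \<le> length ds \<longrightarrow> M (B + i) = deadline ds i"
    and "\<forall>j. 1 \<le> j \<and> j \<le> a \<longrightarrow> M (B + length ds + j) = f j"
    by simp_all
  then show "a < length ds \<Longrightarrow> M (Suc (B + a)) = deadline ds (Suc a)"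
    and "b < a \<Longrightarrow> M (Suc (B + length ds + b)) = f (Suc b)"
    and "b < length ds \<Longrightarrow> M (Suc (B + b)) = deadline ds (Suc b)"
    by (auto dest: spec[of _ "Suc a"] spec[of _ "Suc b"])
qed

lemma loop_first_visit:
  assumes inv: "loop_inv ds B (a, b, f, s) M" and todo: "a + b < 2 * length ds"
    and not_due: "\<not> second_visit_due ds a b"
  shows "reaches prog 24 (94, M)
    (at_pc 94 (loop_inv ds B (a + 1, b, f(a + 1 := a + b + 1), s(a + b + 1 := a + 1))))"
proof (cases "b = a")
  case True
  show ?thesis
    by (rule reaches_at_pcI[where t = 12])
      (use inv todo True loop_inv_lookups[OF inv] in \<open>simp_all add: fun_upd_apply run_prog_simps\<close>)
next
  case False
  with inv not_due have "b < a" "a < length ds" "deadline ds (a + 1) \<le> a + b + 1"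
    by (auto simp: second_visit_due_def)
  then show ?thesis
    by (intro reaches_at_pcI[where t = 19])
      (use inv todo loop_inv_lookups[OF inv] in \<open>simp_all add: fun_upd_apply run_prog_simps\<close>)
qed

lemma loop_second_visit:
  assumes inv: "loop_inv ds B (a, b, f, s) M" and todo: "a + b < 2 * length ds"
    and due: "second_visit_due ds a b"
    and in_time: "a + b + 1 - f (b + 1) \<le> deadline ds (b + 1)"
  shows "reaches prog 24 (94, M) (at_pc 94 (loop_inv ds B (a, b + 1, f, s(a + b + 1 := b + 1))))"
proof (cases "a = length ds")
  case True
  with due show ?thesis
    by (intro reaches_at_pcI[where t = 19])
      (use inv todo in_time loop_inv_lookups[OF inv] in
        \<open>simp_all add: second_visit_due_def fun_upd_apply run_prog_simps\<close>)
next
  case False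
  with inv due have "b < a" "a < length ds" "a + b + 1 < deadline ds (a + 1)"
    by (auto simp: second_visit_due_def)
  then show ?thesis
    by (intro reaches_at_pcI[where t = 24])
      (use inv todo in_time loop_inv_lookups[OF inv] in \<open>simp_all add: fun_upd_apply run_prog_simps\<close>)
qed

lemma loop_late_visit:
  assumes inv: "loop_inv ds B (a, b, f, s) M" and todo: "a + b < 2 * length ds"
    and due: "second_visit_due ds a b"
    and late: "\<not> a + b + 1 - f (b + 1) \<le> deadline ds (b + 1)"
  shows "reaches prog 24 (94, M) (at_pc 127 (\<lambda>_. True))"
proof (cases "a = length ds")
  case True
  with due show ?thesis
    by (intro reaches_at_pcI[where t = 15])
      (use inv todo late loop_inv_lookups[OF inv] in
        \<open>simp_all add: second_visit_due_def run_prog_simps\<close>)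
next
  case False
  with inv due have "b < a" "a < length ds" "a + b + 1 < deadline ds (a + 1)"
    by (auto simp: second_visit_due_def)
  then show ?thesis
    by (intro reaches_at_pcI[where t = 20])
      (use inv todo late loop_inv_lookups[OF inv] in \<open>simp_all add: run_prog_simps\<close>)
qed

lemma loop_exit:
  "loop_inv ds B (a, b, f, s) M \<Longrightarrow> a + b = 2 * length ds \<Longrightarrow>
    reaches prog 2 (94, M) (at_pc 129 (loop_inv ds B (a, b, f, s)))"
  by (rule reaches_at_pcI[where t = 2]) (simp_all add: run_prog_simps)

lemma greedy_step_progress:
  "greedy_step ds (a, b, f, s) = Some (a', b', f', s') \<Longrightarrow> a' + b' = a + b + 1"
  by (auto split: if_splits)

definition greedy_loop_inv :: "nat list \<Rightarrow> nat \<Rightarrow> nat \<Rightarrow> (nat \<Rightarrow> nat) \<Rightarrow> bool" where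
  "greedy_loop_inv ds B k M \<longleftrightarrow> (\<exists>a b f s. a + b + k = 2 * length ds \<and>
     greedy_run ds k (a, b, f, s) = greedy ds \<and> loop_inv ds B (a, b, f, s) M)"

definition greedy_loop_done :: "nat list \<Rightarrow> nat \<Rightarrow> config \<Rightarrow> bool" where
  "greedy_loop_done ds B c \<longleftrightarrow> at_pc 127 (\<lambda>_. greedy ds = None) c \<or>
     at_pc 129 (\<lambda>M. \<exists>st. greedy ds = Some st \<and> loop_inv ds B st M) c"

lemma greedy_loop_body:
  assumes "greedy_loop_inv ds B (Suc k) M"
  shows "reaches prog 24 (94, M) (\<lambda>c. at_pc 94 (greedy_loop_inv ds B k) c \<or> greedy_loop_done ds B c)"
proof -
  from assms obtain a b f s where progress: "a + b + Suc k = 2 * length ds"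
    and run: "greedy_run ds (Suc k) (a, b, f, s) = greedy ds" and inv: "loop_inv ds B (a, b, f, s) M"
    unfolding greedy_loop_inv_def by blast
  then have todo: "a + b < 2 * length ds"
    by simp
  show ?thesis
  proof (cases "greedy_step ds (a, b, f, s)")
    case None
    then have "second_visit_due ds a b" "\<not> a + b + 1 - f (b + 1) \<le> deadline ds (b + 1)"
      by (auto split: if_splits)
    with loop_late_visit[OF inv todo] have "reaches prog 24 (94, M) (at_pc 127 (\<lambda>_. True))"
      by blast
    moreover from None run have "greedy ds = None"
      by simp
    ultimately show ?thesis
      by (elim reaches_mono) (simp_all add: at_pc_def greedy_loop_done_def)
  next
    case (Some st)
    obtain a' b' f' s' where st: "st = (a', b', f', s')"
      by (cases st)
    with Some have "a' + b' = a + b + 1"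
      by (intro greedy_step_progress) simp
    with progress have "a' + b' + k = 2 * length ds"
      by simp
    moreover from run Some st have "greedy_run ds k (a', b', f', s') = greedy ds"
      by simp
    ultimately have "greedy_loop_inv ds B k M'" if "loop_inv ds B (a', b', f', s') M'" for M'
      using that unfolding greedy_loop_inv_def by blast
    moreover have "reaches prog 24 (94, M) (at_pc 94 (loop_inv ds B (a', b', f', s')))"
      using Some st loop_first_visit[OF inv todo] loop_second_visit[OF inv todo]
      by (auto split: if_splits)
    ultimately show ?thesis
      by (elim reaches_mono) (simp_all add: at_pc_def)
  qed
qed

lemma greedy_loop_exit:
  assumes "greedy_loop_inv ds B 0 M"
  shows "reaches prog 2 (94, M) (greedy_loop_done ds B)"
proof -
  from assms obtain a b f s where "a + b + 0 = 2 * length ds"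
    and "greedy_run ds 0 (a, b, f, s) = greedy ds" and inv: "loop_inv ds B (a, b, f, s) M"
    unfolding greedy_loop_inv_def by blast
  then have "a + b = 2 * length ds" and result: "greedy ds = Some (a, b, f, s)"
    by simp_all
  from loop_exit[OF inv this(1)] result show ?thesis
    by (elim reaches_mono) (auto simp: at_pc_def greedy_loop_done_def simp del: loop_inv.simps)
qed

lemma greedy_loop:
  assumes "loop_inv ds B (0, 0, \<lambda>_. 0, \<lambda>_. 0) M"
  shows "reaches prog (24 * (2 * length ds) + 2) (94, M) (greedy_loop_done ds B)"
proof (rule reaches_loop[where I = "greedy_loop_inv ds B"])
  show "greedy_loop_inv ds B (2 * length ds) M"
    using assms unfolding greedy_loop_inv_def greedy_def by auto
qed (fact greedy_loop_body greedy_loop_exit)+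

lemma reject:
  "reaches prog 2 (127, M) (\<lambda>c. halted prog c \<and> snd c 0 = 0)"
proof (rule reachesI[where t = 2])
  have "run prog 2 (127, M) = (166, M(0 := 0))"
    by (simp add: run_prog_simps)
  then show "halted prog (run prog 2 (127, M)) \<and> snd (run prog 2 (127, M)) 0 = 0"
    by (simp add: halted_def)
qed simp

definition copy_out_inv :: "nat \<Rightarrow> nat \<Rightarrow> (nat \<Rightarrow> nat) \<Rightarrow> nat \<Rightarrow> (nat \<Rightarrow> nat) \<Rightarrow> bool" where
  "copy_out_inv n B s q M \<longleftrightarrow> M 1 = q \<and> q \<le> 2 * n \<and> M 2 = 13 \<and> M 7 = 1 \<and> M 8 = 0 \<and>
     M 13 = B + 2 * n \<and> 13 < B \<and>
     (\<forall>r. 1 \<le> r \<and> r \<le> 2 * n \<longrightarrow> M (B + 2 * n + r) = s r) \<and>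
     (\<forall>r. q < r \<and> r \<le> 2 * n \<longrightarrow> M r = s r)"

lemma copy_out_init:
  "loop_inv ds B (length ds, length ds, f, s) M \<Longrightarrow>
    reaches prog 2 (129, M) (at_pc 131 (copy_out_inv (length ds) B s (2 * length ds)))"
  by (rule reaches_at_pcI[where t = 2]) (auto simp: copy_out_inv_def run_prog_simps)

lemma copy_out_step:
  assumes inv: "copy_out_inv n B s (Suc q) M" and "13 < Suc q"
  shows "\<exists>M'. run prog 7 (131, M) = (131, M') \<and> copy_out_inv n B s q M'"
proof -
  let ?M' = "M(5 := Suc q - 13, 6 := B + 2 * n + Suc q, 5 := s (Suc q), Suc q := s (Suc q), 1 := q)"
  have "M (B + 2 * n + Suc q) = s (Suc q)"
    using inv by (auto simp: copy_out_inv_def)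
  with inv assms(2) have "run prog 7 (131, M) = (131, ?M')"
    by (simp add: copy_out_inv_def run_prog_simps)
  moreover from inv assms(2) have "copy_out_inv n B s q ?M'"
    by (auto simp: copy_out_inv_def)
  ultimately show ?thesis
    by blast
qed

lemma restore_registers:
  assumes "M 2 = 13" "13 < M 13"
  shows "\<exists>M'. run prog 28 (138, M) = (166, M') \<and> M' 0 = 1 \<and>
     (\<forall>k. 1 \<le> k \<and> k \<le> 13 \<longrightarrow> M' k = M (M 13 + k)) \<and> (\<forall>r. 13 < r \<longrightarrow> M' r = M r)"
  using assms by (simp add: run_prog_simps, intro allI impI, simp add: add.commute, arith)

lemma copy_out_exit:
  assumes inv: "copy_out_inv n B s q M" and "q \<le> 13"
  shows "reaches prog 30 (131, M) (\<lambda>c. halted prog c \<and> snd c 0 = 1 \<and>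
    output_schedule n (snd c) = map (\<lambda>q. s (q + 1)) [0..<2 * n])"
proof -
  from inv have regs: "M 2 = 13" "M 13 = B + 2 * n" "13 < B"
    and stored: "\<forall>r. 1 \<le> r \<and> r \<le> 2 * n \<longrightarrow> M (B + 2 * n + r) = s r"
    and copied: "\<forall>r. 13 < r \<and> r \<le> 2 * n \<longrightarrow> M r = s r"
    using \<open>q \<le> 13\<close> by (auto simp: copy_out_inv_def)
  from inv \<open>q \<le> 13\<close> have "run prog 2 (131, M) = (138, M(5 := 0))"
    by (simp add: copy_out_inv_def run_prog_simps)
  moreover obtain M' where "run prog 28 (138, M(5 := 0)) = (166, M')" and "M' 0 = 1"
    and low: "\<forall>k. 1 \<le> k \<and> k \<le> 13 \<longrightarrow> M' k = M (M 13 + k)" and high: "\<forall>r. 13 < r \<longrightarrow> M' r = M r"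
    using restore_registers[of "M(5 := 0)"] regs by auto
  moreover have "output_schedule n M' = map (\<lambda>q. s (q + 1)) [0..<2 * n]"
    unfolding output_schedule_def
  proof (rule map_cong[OF refl])
    fix q assume "q \<in> set [0..<2 * n]"
    then have q: "q < 2 * n"
      by simp
    show "M' (q + 1) = s (q + 1)"
    proof (cases "q + 1 \<le> 13")
      case True
      with low regs have "M' (q + 1) = M (B + 2 * n + (q + 1))"
        by simp
      also have "\<dots> = s (q + 1)"
        using stored[rule_format, of "q + 1"] q by simp
      finally show ?thesis .
    next
      case False
      with high copied q show ?thesis
        by simp
    qed
  qed
  ultimately show ?thesis
    by (intro reachesI[where t = 30]) (simp_all add: run_add[of prog 2 28, simplified] halted_def)
qed

lemma copy_out:
  assumes "copy_out_inv n B s (2 * n) M"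
  shows "reaches prog (7 * (2 * n - 13) + 30) (131, M) (\<lambda>c. halted prog c \<and> snd c 0 = 1 \<and>
    output_schedule n (snd c) = map (\<lambda>q. s (q + 1)) [0..<2 * n])"
    (is "reaches _ _ _ ?Q")
proof -
  let ?I = "\<lambda>k M. \<exists>q. q - 13 = k \<and> copy_out_inv n B s q M"
  have body: "reaches prog 7 (131, M') (\<lambda>c. at_pc 131 (?I k) c \<or> ?Q c)" if "?I (Suc k) M'" for k M'
  proof -
    from that obtain q where q: "q - 13 = Suc k" and inv: "copy_out_inv n B s q M'"
      by blast
    then have "copy_out_inv n B s (Suc (q - 1)) M'" "13 < Suc (q - 1)"
      by (simp_all add: Suc_pred)
    from copy_out_step[OF this] obtain M'' where "run prog 7 (131, M') = (131, M'')"
      and "copy_out_inv n B s (q - 1) M''"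
      by blast
    moreover have "q - 1 - 13 = k"
      using q by simp
    ultimately show ?thesis
      by (intro reaches_continueI[where t = 7]) (blast, simp)
  qed
  have exit: "reaches prog 30 (131, M') ?Q" if "?I 0 M'" for M'
    using that copy_out_exit by auto
  from assms have "?I (2 * n - 13) M"
    by blast
  from reaches_loop[where I = ?I, OF body exit this] show ?thesis .
qed

lemma write_output:
  assumes "loop_inv ds B (length ds, length ds, f, s) M"
  shows "reaches prog (14 * length ds + 32) (129, M) (\<lambda>c. halted prog c \<and> snd c 0 = 1 \<and>
    output_schedule (length ds) (snd c) = map (\<lambda>q. s (q + 1)) [0..<2 * length ds])"
proof -
  have "reaches prog (2 + (7 * (2 * length ds - 13) + 30)) (129, M) (\<lambda>c. halted prog c \<and> snd c 0 = 1 \<and>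
      output_schedule (length ds) (snd c) = map (\<lambda>q. s (q + 1)) [0..<2 * length ds])"
    by (rule reaches_seq[OF copy_out_init[OF assms] copy_out])
  then show ?thesis
    by (rule reaches_mono) simp_all
qed

lemma greedy_outcome:
  assumes strict: "strict_instance ds" and "loop_inv ds B (0, 0, \<lambda>_. 0, \<lambda>_. 0) M"
  shows "reaches prog (24 * (2 * length ds) + 2 + (14 * length ds + 32)) (94, M)
    (\<lambda>c. halted prog c \<and> correct_output ds (snd c))"
proof (rule reaches_trans[OF greedy_loop[OF assms(2)]])
  fix c assume "greedy_loop_done ds B c"
  moreover obtain pc M' where c: "c = (pc, M')"
    by (cases c)
  ultimately consider "pc = 127" "greedy ds = None"
    | a b f s where "pc = 129" "greedy ds = Some (a, b, f, s)" "loop_inv ds B (a, b, f, s) M'"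
    by (auto simp: greedy_loop_done_def at_pc_def simp del: loop_inv.simps)
  then show "reaches prog (14 * length ds + 32) c (\<lambda>c. halted prog c \<and> correct_output ds (snd c))"
  proof cases
    case 1
    with greedy_None_infeasible[OF strict] have "\<not> has_feasible_schedule ds"
      by simp
    then have "reaches prog (14 * length ds + 32) (127, M') (\<lambda>c. halted prog c \<and> correct_output ds (snd c))"
      by (intro reaches_mono[OF reject]) (auto simp: correct_output_def)
    with c 1 show ?thesis
      by simp
  next
    case (2 a b f s)
    from greedy_Some_feasible[OF strict 2(2)] have "a = length ds" "b = length ds"
      and feasible: "feasible_schedule ds (map (\<lambda>q. s (q + 1)) [0..<2 * length ds])"
      by simp_all
    with 2(3) have "reaches prog (14 * length ds + 32) (129, M') (\<lambda>c. halted prog c \<and> snd c 0 = 1 \<and>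
        output_schedule (length ds) (snd c) = map (\<lambda>q. s (q + 1)) [0..<2 * length ds])"
      using write_output by (simp del: loop_inv.simps)
    then have "reaches prog (14 * length ds + 32) (129, M') (\<lambda>c. halted prog c \<and> correct_output ds (snd c))"
      by (rule reaches_mono) (use feasible in \<open>auto simp: correct_output_def has_feasible_schedule_def\<close>)
    with c 2 show ?thesis
      by simp
  qed
qed

lemma prog_correct:
  assumes strict: "strict_instance ds"
  shows "reaches prog (70 * length ds + 219) (0, input_mem ds) (\<lambda>c. halted prog c \<and> correct_output ds (snd c))"
proof -
  have copied: "reaches prog (36 + (8 * length ds + 149)) (0, input_mem ds)
      (at_pc 94 (\<lambda>M. \<exists>B. loop_inv ds B (0, 0, \<lambda>_. 0, \<lambda>_. 0) M))"
  proof (rule reaches_seq[OF park[OF strict]])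
    fix M assume "\<exists>Z. parked ds Z M"
    then obtain Z where "parked ds Z M" ..
    then have "reaches prog (8 * length ds + 149) (63, M) (at_pc 94 (loop_inv ds (Z + 13) (0, 0, \<lambda>_. 0, \<lambda>_. 0)))"
      by (rule copy_deadlines)
    then show "reaches prog (8 * length ds + 149) (63, M)
        (at_pc 94 (\<lambda>M. \<exists>B. loop_inv ds B (0, 0, \<lambda>_. 0, \<lambda>_. 0) M))"
      by (rule reaches_mono) (auto simp: at_pc_def simp del: loop_inv.simps)
  qed
  have "reaches prog (36 + (8 * length ds + 149) + (24 * (2 * length ds) + 2 + (14 * length ds + 32)))
      (0, input_mem ds) (\<lambda>c. halted prog c \<and> correct_output ds (snd c))"
  proof (rule reaches_seq[OF copied])
    fix M assume "\<exists>B. loop_inv ds B (0, 0, \<lambda>_. 0, \<lambda>_. 0) M"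
    then obtain B where "loop_inv ds B (0, 0, \<lambda>_. 0, \<lambda>_. 0) M" ..
    then show "reaches prog (24 * (2 * length ds) + 2 + (14 * length ds + 32)) (94, M)
        (\<lambda>c. halted prog c \<and> correct_output ds (snd c))"
      by (rule greedy_outcome[OF strict])
  qed
  then show ?thesis
    by (rule reaches_mono) simp_all
qed

theorem theorem3:
  shows "\<exists>(P :: instr list) (c :: nat). \<forall>ds.
           two_visits_instance ds \<and> distinct ds \<longrightarrow>
           (\<exists>t \<le> c * (length ds + 1).
              halted P (run P t (0, input_mem ds)) \<and>
              correct_output ds (snd (run P t (0, input_mem ds))))"
proof -
  have "reaches prog (219 * (length ds + 1)) (0, input_mem ds) (\<lambda>c. halted prog c \<and> correct_output ds (snd c))"
    if "two_visits_instance ds \<and> distinct ds" for ds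
  proof (rule reaches_mono)
    show "reaches prog (70 * length ds + 219) (0, input_mem ds) (\<lambda>c. halted prog c \<and> correct_output ds (snd c))"
      using that by (intro prog_correct strict_instanceI) simp_all
  qed simp_all
  then show ?thesis
    unfolding reaches_def by blast
qed

end
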